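(* Let $1\le p<\infty$, $0\le\lambda_1,\lambda_2<n$ with $0<\lambda_1+\lambda_2<n$, let $w$ be a weight on $\mathbb{R}^n$ and $\varphi(B)=r_B^{\lambda_1}w(B)^{\lambda_2/n}$. Suppose $w\in A(\mathcal M^{p}(\varphi))$. Then: (a) for all balls $B_1\subset B_2$, $$\frac{w(B_1)}{w(B_2)}\le C\left(\frac{|B_1|}{|B_2|}\right)^{\frac{\lambda_1}{n-\lambda_2}},$$ with $C$ independent of the balls; that is, $w\in RD_{\lambda_1/(n-\lambda_2)}$; (b) $w\in A_{\frac{np+\lambda_1}{n-\lambda_2}}$.
   Context: A weight is a nonnegative locally integrable function; $w(E)=\int_Ew$; $r_B$ is the radius of the ball $B$. $\mathcal M^{p}(\varphi,w)$: measurable $f$ with $\|f\|_{\mathcal M^{p}(\varphi,w)}:=\sup_B\big(\varphi(B)^{-1}\int_B|f|^pw\big)^{1/p}<\infty$, over all balls. Köthe dual: $\|g\|_{X'}:=\sup\{\int|fg|:\|f\|_X\le1\}$. $w\in A(\mathcal M^{p}(\varphi))$ means $\sup_B\|\chi_B\|_{\mathcal M^{p}(\varphi,w)}\|\chi_B\|_{\mathcal M^{p}(\varphi,w)'}/|B|<\infty$ over all balls. $RD_\delta$: weights with $w(B_1)/w(B_2)\le C(|B_1|/|B_2|)^\delta$ for balls $B_1\subset B_2$. $A_r$ ($r>1$) is the usual Muckenhoupt class: $\sup_B (|B|^{-1}\int_Bw)(|B|^{-1}\int_Bw^{1-r'})^{r-1}<\infty$. *)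

theory Defs
  imports "HOL-Analysis.Analysis"
begin

definition is_weight :: "('a::euclidean_space \<Rightarrow> real) \<Rightarrow> bool" where
  "is_weight w \<longleftrightarrow> (\<forall>x. 0 \<le> w x) \<and> w \<in> borel_measurable lebesgue \<and>
     (\<forall>K. compact K \<longrightarrow> set_integrable lebesgue K w)"

text \<open>w(E) = integral of w over E (finite for balls, by local integrability).\<close>
definition wmeas :: "('a::euclidean_space \<Rightarrow> real) \<Rightarrow> 'a set \<Rightarrow> real" where
  "wmeas w E = enn2real (\<integral>\<^sup>+ y \<in> E. ennreal (w y) \<partial>lebesgue)"

definition enn_rpow :: "ennreal \<Rightarrow> real \<Rightarrow> ennreal" where
  "enn_rpow x a = (if x = top then top else ennreal (enn2real x powr a))"

definition phi_w :: "real \<Rightarrow> real \<Rightarrow> ('a::euclidean_space \<Rightarrow> real) \<Rightarrow> 'a \<Rightarrow> real \<Rightarrow> real" where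
  "phi_w l1 l2 w x r = r powr l1 *
     (if l2 = 0 then 1 else wmeas w (ball x r) powr (l2 / real DIM('a)))"

definition morrey_norm :: "real \<Rightarrow> ('a::euclidean_space \<Rightarrow> real \<Rightarrow> real) \<Rightarrow> ('a \<Rightarrow> real)
    \<Rightarrow> ('a \<Rightarrow> real) \<Rightarrow> ennreal" where
  "morrey_norm p phi w f = enn_rpow
     (SUP xr \<in> {xr. snd xr > 0}.
        (\<integral>\<^sup>+ y \<in> ball (fst xr) (snd xr). ennreal (\<bar>f y\<bar> powr p * w y) \<partial>lebesgue)
          / ennreal (phi (fst xr) (snd xr)))
     (1 / p)"

definition kothe_norm :: "(('a::euclidean_space \<Rightarrow> real) \<Rightarrow> ennreal) \<Rightarrow> ('a \<Rightarrow> real) \<Rightarrow> ennreal" where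
  "kothe_norm N g = (SUP f \<in> {f. f \<in> borel_measurable lebesgue \<and> N f \<le> 1}.
      \<integral>\<^sup>+ y. ennreal \<bar>f y * g y\<bar> \<partial>lebesgue)"

definition A_morrey :: "real \<Rightarrow> ('a::euclidean_space \<Rightarrow> real \<Rightarrow> real) \<Rightarrow> ('a \<Rightarrow> real) \<Rightarrow> bool" where
  "A_morrey p phi w \<longleftrightarrow> (\<exists>C::real. \<forall>x r. r > 0 \<longrightarrow>
      morrey_norm p phi w (indicator (ball x r))
        * kothe_norm (morrey_norm p phi w) (indicator (ball x r))
      \<le> ennreal C * emeasure lebesgue (ball x r))"

definition RD :: "real \<Rightarrow> ('a::euclidean_space \<Rightarrow> real) \<Rightarrow> bool" where
  "RD \<delta> w \<longleftrightarrow> (\<exists>C::real. \<forall>x1 r1 x2 r2. 0 < r1 \<longrightarrow> 0 < r2 \<longrightarrow> ball x1 r1 \<subseteq> ball x2 r2 \<longrightarrow>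
      wmeas w (ball x1 r1) / wmeas w (ball x2 r2)
        \<le> C * (measure lebesgue (ball x1 r1) / measure lebesgue (ball x2 r2)) powr \<delta>)"

text \<open>Muckenhoupt class A_r (r > 1), with r' = r/(r-1); w^(1-r') is +infinity where w = 0.\<close>
definition muckenhoupt :: "real \<Rightarrow> ('a::euclidean_space \<Rightarrow> real) \<Rightarrow> bool" where
  "muckenhoupt r w \<longleftrightarrow> (\<exists>C::real. \<forall>x s. s > 0 \<longrightarrow>
      (\<integral>\<^sup>+ y \<in> ball x s. ennreal (w y) \<partial>lebesgue) / emeasure lebesgue (ball x s)
      * enn_rpow ((\<integral>\<^sup>+ y \<in> ball x s.
            (if w y = 0 then top else ennreal (w y powr (1 - r / (r - 1)))) \<partial>lebesgue)
           / emeasure lebesgue (ball x s)) (r - 1)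
      \<le> ennreal C)"

end

theory Submission
  imports Defs
begin

text \<open>
  Everything comes from testing the \<open>A(M\<^sup>p(\<phi>))\<close> condition on a ball \<open>B\<^sub>2\<close> against two functions,
  with \<open>\<rho> = (np + \<lambda>\<^sub>1)/(n - \<lambda>\<^sub>2)\<close>, \<open>\<delta> = \<lambda>\<^sub>1/(n - \<lambda>\<^sub>2)\<close> and the dual weight \<open>\<sigma> = w\<^bsup>-\<kappa>\<^esup> = w\<^bsup>1-\<rho>'\<^esup>\<close>.
  For a ball \<open>B\<^sub>1 \<subseteq> B\<^sub>2\<close>, the Morrey norm of \<open>\<chi>\<^sub>B\<^sub>2\<close> is at least \<open>(w(B\<^sub>1)/\<phi>(B\<^sub>1))\<^bsup>1/p\<^esup>\<close>.
  For a set \<open>E \<subseteq> B\<^sub>2\<close> on which \<open>w\<close> is bounded below, Hoelder's inequality with exponents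
  \<open>\<lambda>\<^sub>2/n\<close>, \<open>(n - \<lambda>\<^sub>1 - \<lambda>\<^sub>2)/n\<close>, \<open>\<lambda>\<^sub>1/n\<close> shows that a suitable multiple \<open>k \<chi>\<^sub>E \<sigma>\<close> has Morrey norm
  at most 1, so the Koethe dual norm of \<open>\<chi>\<^sub>B\<^sub>2\<close> is at least \<open>k \<sigma>(E)\<close>. The \<open>A(M\<^sup>p(\<phi>))\<close> condition
  then gives \<open>w(B\<^sub>1) \<sigma>(E)\<^bsup>\<rho>-1\<^esup> \<le> C\<^bsup>\<rho>-\<delta>\<^esup> |B\<^sub>1|\<^bsup>\<delta>\<^esup> |B\<^sub>2|\<^bsup>\<rho>-\<delta>\<^esup>\<close>.

  Testing instead against multiples of the indicator of \<open>B \<inter> {w = 0}\<close> shows that this set is null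
  whenever \<open>w(B) > 0\<close>. Hence, taking \<open>B\<^sub>1 = B\<^sub>2\<close> and letting \<open>E\<close> exhaust \<open>B\<^sub>2 \<inter> {w > 0}\<close> gives the
  \<open>A\<^sub>\<rho>\<close> condition, while choosing \<open>|E| > |B\<^sub>2|/2\<close> and using \<open>|E|\<^sup>\<rho> \<le> w(B\<^sub>2) \<sigma>(E)\<^bsup>\<rho>-1\<^esup>\<close> (Hoelder
  again) gives the reverse doubling estimate.
\<close>

lemma weighted_geometric_mean_le3:
  fixes x y z a b c :: real
  assumes "0 \<le> a" "0 \<le> b" "0 \<le> c" "a + b + c = 1" "0 < x" "0 < y" "0 < z"
  shows "x powr a * y powr b * z powr c \<le> a * x + b * y + c * z"
proof (cases "a + b = 0")
  case True
  with assms have "a = 0" "b = 0" "c = 1" by auto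
  with assms show ?thesis by simp
next
  case False
  define s where "s = a + b"
  have s: "0 < s" using False assms by (simp add: s_def)
  define m where "m = (a / s) * x + (b / s) * y"
  have m: "0 < m"
    using assms s False unfolding m_def s_def
    by (smt (verit, best) divide_nonneg_pos mult_nonneg_nonneg mult_pos_pos zero_less_divide_iff)
  have "x powr (a / s) * y powr (b / s) \<le> m"
    using Youngs_inequality_0[of "a / s" "b / s" x y] assms s
    by (simp add: m_def s_def add_divide_distrib[symmetric])
  then have "(x powr (a / s) * y powr (b / s)) powr s \<le> m powr s"
    using s by (intro powr_mono2) auto
  then have "x powr a * y powr b \<le> m powr s"
    using assms s by (simp add: powr_mult powr_powr)
  then have "x powr a * y powr b * z powr c \<le> m powr s * z powr c"
    by (simp add: mult_right_mono)
  also have "\<dots> \<le> s * m + c * z"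
    using Youngs_inequality_0[of s c m z] assms s m by (simp add: s_def)
  also have "s * m = a * x + b * y"
    using s by (simp add: m_def field_simps)
  finally show ?thesis .
qed

lemma null_set_if_nn_integral_eq_0:
  assumes "S \<in> sets M" "u \<in> borel_measurable M" "\<And>x. x \<in> S \<Longrightarrow> 0 < u x"
    and "(\<integral>\<^sup>+x\<in>S. ennreal (u x) \<partial>M) = 0"
  shows "S \<in> null_sets M"
proof -
  have "AE x in M. ennreal (u x) * indicator S x = 0"
    using assms by (subst nn_integral_0_iff_AE[symmetric]) auto
  then have "AE x in M. x \<notin> S"
    by eventually_elim (use assms(3) in \<open>force simp: indicator_def\<close>)
  then show ?thesis
    using AE_iff_measurable[OF assms(1), of "\<lambda>x. x \<notin> S"] assms(1) sets.sets_into_space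
    by (auto simp: null_sets_def)
qed

text \<open>Hoelder's inequality for \<open>u\<close>, \<open>v\<close> and \<open>1\<close> with exponents \<open>1/\<alpha>\<close>, \<open>1/\<beta>\<close>, \<open>1/\<gamma>\<close>,
  obtained by integrating the pointwise weighted AM-GM inequality.\<close>
lemma nn_integral_powr_mult_le_pos:
  fixes u v :: "'b \<Rightarrow> real"
  assumes S: "S \<in> sets M" and [measurable]: "u \<in> borel_measurable M" "v \<in> borel_measurable M"
    and u_pos: "\<And>x. x \<in> S \<Longrightarrow> 0 < u x" and v_pos: "\<And>x. x \<in> S \<Longrightarrow> 0 < v x"
    and exps: "0 \<le> \<alpha>" "0 \<le> \<beta>" "0 \<le> \<gamma>" "\<alpha> + \<beta> + \<gamma> = 1"
    and pos: "0 < a" "0 < b" "0 < c"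
    and u_le: "(\<integral>\<^sup>+x\<in>S. ennreal (u x) \<partial>M) \<le> ennreal a"
    and v_le: "(\<integral>\<^sup>+x\<in>S. ennreal (v x) \<partial>M) \<le> ennreal b"
    and S_le: "emeasure M S \<le> ennreal c"
  shows "(\<integral>\<^sup>+x\<in>S. ennreal (u x powr \<alpha> * v x powr \<beta>) \<partial>M) \<le> ennreal (a powr \<alpha> * b powr \<beta> * c powr \<gamma>)"
proof -
  define K where "K = a powr \<alpha> * b powr \<beta> * c powr \<gamma>"
  have K: "0 < K" using pos by (simp add: K_def)
  have pointwise: "ennreal (u x powr \<alpha> * v x powr \<beta>) * indicator S x \<le>
      ennreal (K * \<alpha> / a) * (ennreal (u x) * indicator S x)
      + ennreal (K * \<beta> / b) * (ennreal (v x) * indicator S x) + ennreal (K * \<gamma> / c) * indicator S x" for x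
  proof (cases "x \<in> S")
    case True
    have "u x powr \<alpha> * v x powr \<beta> = K * ((u x / a) powr \<alpha> * (v x / b) powr \<beta> * (1 / c) powr \<gamma>)"
      using pos u_pos[OF True] v_pos[OF True] by (simp add: K_def powr_divide)
    also have "\<dots> \<le> K * (\<alpha> * (u x / a) + \<beta> * (v x / b) + \<gamma> * (1 / c))"
      using weighted_geometric_mean_le3[OF exps, of "u x / a" "v x / b" "1 / c"] pos
        u_pos[OF True] v_pos[OF True] K
      by (intro mult_left_mono) auto
    also have "\<dots> = K * \<alpha> / a * u x + K * \<beta> / b * v x + K * \<gamma> / c"
      by (simp add: field_simps)
    finally show ?thesis
      using True pos K exps u_pos[OF True] v_pos[OF True]
      by (simp add: ennreal_mult'[symmetric] ennreal_plus[symmetric] del: ennreal_plus)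
  qed simp
  have "(\<integral>\<^sup>+x\<in>S. ennreal (u x powr \<alpha> * v x powr \<beta>) \<partial>M) \<le>
      ennreal (K * \<alpha> / a) * (\<integral>\<^sup>+x\<in>S. ennreal (u x) \<partial>M)
      + ennreal (K * \<beta> / b) * (\<integral>\<^sup>+x\<in>S. ennreal (v x) \<partial>M) + ennreal (K * \<gamma> / c) * emeasure M S"
    using S by (subst nn_integral_cmult_indicator[symmetric])
      (auto simp: nn_integral_add nn_integral_cmult intro!: nn_integral_mono[OF pointwise, THEN order_trans])
  also have "\<dots> \<le> ennreal (K * \<alpha> / a) * ennreal a + ennreal (K * \<beta> / b) * ennreal b
      + ennreal (K * \<gamma> / c) * ennreal c"
    by (intro add_mono mult_left_mono u_le v_le S_le) auto
  also have "\<dots> = ennreal K"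
    using pos K exps by (simp add: ennreal_mult[symmetric] ennreal_plus[symmetric] distrib_left[symmetric]
        del: ennreal_plus)
  finally show ?thesis by (simp add: K_def)
qed

lemma nn_integral_powr_mult_le:
  fixes u v :: "'b \<Rightarrow> real"
  assumes S: "S \<in> sets M" and [measurable]: "u \<in> borel_measurable M" "v \<in> borel_measurable M"
    and u_pos: "\<And>x. x \<in> S \<Longrightarrow> 0 < u x" and v_pos: "\<And>x. x \<in> S \<Longrightarrow> 0 < v x"
    and exps: "0 \<le> \<alpha>" "0 \<le> \<beta>" "0 \<le> \<gamma>" "\<alpha> + \<beta> + \<gamma> = 1"
    and abc: "0 \<le> a" "0 \<le> b" "0 \<le> c"
    and u_le: "(\<integral>\<^sup>+x\<in>S. ennreal (u x) \<partial>M) \<le> ennreal a"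
    and v_le: "(\<integral>\<^sup>+x\<in>S. ennreal (v x) \<partial>M) \<le> ennreal b"
    and S_le: "emeasure M S \<le> ennreal c"
  shows "(\<integral>\<^sup>+x\<in>S. ennreal (u x powr \<alpha> * v x powr \<beta>) \<partial>M) \<le> ennreal (a powr \<alpha> * b powr \<beta> * c powr \<gamma>)"
proof (cases "a = 0 \<or> b = 0 \<or> c = 0")
  case True
  moreover have "S \<in> null_sets M" if "a = 0"
    using null_set_if_nn_integral_eq_0[of S M u] S u_pos u_le that by simp
  moreover have "S \<in> null_sets M" if "b = 0"
    using null_set_if_nn_integral_eq_0[of S M v] S v_pos v_le that by simp
  moreover have "S \<in> null_sets M" if "c = 0"
    using S S_le that by auto
  ultimately have "S \<in> null_sets M" by blast
  then show ?thesis by (simp add: nn_integral_null_set)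
next
  case False
  with abc show ?thesis
    by (intro nn_integral_powr_mult_le_pos[OF S _ _ u_pos v_pos exps _ _ _ u_le v_le S_le]) auto
qed

lemma enn_rpow_ennreal [simp]: "0 \<le> x \<Longrightarrow> enn_rpow (ennreal x) a = ennreal (x powr a)"
  by (simp add: enn_rpow_def)

lemma enn_rpow_one [simp]: "enn_rpow 1 a = 1"
  by (simp add: enn_rpow_def)

lemma enn_rpow_mono:
  assumes "X \<le> Y" "0 \<le> a"
  shows "enn_rpow X a \<le> enn_rpow Y a"
proof (cases "Y = top")
  case False
  with assms(1) have "X \<noteq> top" "enn2real X \<le> enn2real Y"
    by (auto simp: top_unique enn2real_mono less_top)
  with False assms(2) show ?thesis
    by (simp add: enn_rpow_def powr_mono2)
qed (simp add: enn_rpow_def)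

lemma emeasure_lebesgue_ball: "emeasure lebesgue (ball x r) = ennreal (measure lebesgue (ball x r))"
  unfolding measure_def using emeasure_lborel_ball_finite[of x r] by simp

lemma measure_lebesgue_ball:
  "0 < r \<Longrightarrow> measure lebesgue (ball (x::'a::euclidean_space) r) = unit_ball_vol (real DIM('a)) * r powr real DIM('a)"
  by (simp add: content_ball powr_realpow)

lemma measure_lebesgue_ball_pos: "0 < r \<Longrightarrow> 0 < measure lebesgue (ball (x::'a::euclidean_space) r)"
  by (simp add: measure_lebesgue_ball)

lemma sets_lebesgue_ball [measurable]: "ball (x::'a::euclidean_space) r \<in> sets lebesgue"
  by simp

lemma sets_lebesgue_Collect: "Measurable.pred lebesgue P \<Longrightarrow> {y. P y} \<in> sets lebesgue"
  by (simp add: pred_def)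

lemma wmeas_nonneg: "0 \<le> wmeas w E"
  by (simp add: wmeas_def)

lemma is_weight_nn_integral_ball:
  assumes "is_weight w"
  shows "(\<integral>\<^sup>+ y\<in>ball x r. ennreal (w y) \<partial>lebesgue) = ennreal (wmeas w (ball x r))"
proof -
  have "integrable lebesgue (\<lambda>y. indicator (cball x r) y *\<^sub>R w y)"
    using assms by (simp add: is_weight_def set_integrable_def)
  moreover have "(\<integral>\<^sup>+ y\<in>cball x r. ennreal (w y) \<partial>lebesgue)
      = (\<integral>\<^sup>+ y. ennreal (norm (indicator (cball x r) y *\<^sub>R w y)) \<partial>lebesgue)"
    using assms by (intro nn_integral_cong) (auto simp: is_weight_def indicator_def)
  ultimately have "(\<integral>\<^sup>+ y\<in>cball x r. ennreal (w y) \<partial>lebesgue) < top"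
    by (simp add: integrable_iff_bounded)
  moreover have "(\<integral>\<^sup>+ y\<in>ball x r. ennreal (w y) \<partial>lebesgue) \<le> (\<integral>\<^sup>+ y\<in>cball x r. ennreal (w y) \<partial>lebesgue)"
    by (intro nn_integral_mono) (auto simp: indicator_def)
  ultimately show ?thesis
    by (simp add: wmeas_def top.not_eq_extremum order_le_less_trans)
qed

lemma phi_w_ge:
  fixes w :: "'a::euclidean_space \<Rightarrow> real"
  shows "r powr l1 * wmeas w (ball x r) powr (l2 / real DIM('a)) \<le> phi_w l1 l2 w x r"
  by (simp add: phi_w_def powr_def)

lemma phi_w_eq:
  fixes w :: "'a::euclidean_space \<Rightarrow> real"
  shows "0 < wmeas w (ball x r) \<Longrightarrow> phi_w l1 l2 w x r = r powr l1 * wmeas w (ball x r) powr (l2 / real DIM('a))"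
  by (simp add: phi_w_def)

lemma kothe_norm_ge:
  "f \<in> borel_measurable lebesgue \<Longrightarrow> N f \<le> 1 \<Longrightarrow> (\<integral>\<^sup>+ y. ennreal \<bar>f y * g y\<bar> \<partial>lebesgue) \<le> kothe_norm N g"
  unfolding kothe_norm_def by (rule SUP_upper) simp

lemma morrey_norm_le_one:
  assumes "0 < p"
    and "\<And>x r. 0 < r \<Longrightarrow> (\<integral>\<^sup>+ y\<in>ball x r. ennreal (\<bar>f y\<bar> powr p * w y) \<partial>lebesgue) \<le> ennreal (phi x r)"
  shows "morrey_norm p phi w f \<le> 1"
proof -
  have "X / ennreal c \<le> 1" if "X \<le> ennreal c" for X c
  proof (cases "0 < c")
    case True
    have "X / ennreal c \<le> ennreal c / ennreal c"
      using that by (rule divide_right_mono_ennreal)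
    with True show ?thesis by simp
  qed (use that in \<open>simp add: ennreal_neg\<close>)
  with assms(2) have "(\<integral>\<^sup>+ y\<in>ball x r. ennreal (\<bar>f y\<bar> powr p * w y) \<partial>lebesgue) / ennreal (phi x r) \<le> 1"
    if "0 < r" for x r
    using that by blast
  then have "(SUP xr \<in> {xr. 0 < snd xr}. (\<integral>\<^sup>+ y\<in>ball (fst xr) (snd xr). ennreal (\<bar>f y\<bar> powr p * w y) \<partial>lebesgue)
      / ennreal (phi (fst xr) (snd xr))) \<le> 1"
    by (auto intro!: SUP_least)
  from enn_rpow_mono[OF this, of "1 / p"] assms(1) show ?thesis
    by (simp add: morrey_norm_def)
qed

lemma morrey_norm_indicator_ball_ge:
  assumes "is_weight w" "0 < p" "0 < r1" "ball x1 r1 \<subseteq> ball x r" "0 < phi x1 r1"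
  shows "ennreal ((wmeas w (ball x1 r1) / phi x1 r1) powr (1 / p))
    \<le> morrey_norm p phi w (indicator (ball x r))"
proof -
  have "(\<integral>\<^sup>+ y\<in>ball x1 r1. ennreal (\<bar>indicator (ball x r) y :: real\<bar> powr p * w y) \<partial>lebesgue)
      = ennreal (wmeas w (ball x1 r1))"
    using assms(1,4) by (subst is_weight_nn_integral_ball[symmetric]) (auto intro!: nn_integral_cong simp: indicator_def)
  then have "ennreal (wmeas w (ball x1 r1) / phi x1 r1)
      \<le> (SUP xr \<in> {xr. 0 < snd xr}. (\<integral>\<^sup>+ y\<in>ball (fst xr) (snd xr).
           ennreal (\<bar>indicator (ball x r) y :: real\<bar> powr p * w y) \<partial>lebesgue) / ennreal (phi (fst xr) (snd xr)))"
    using assms(3,5) by (intro SUP_upper2[of "(x1, r1)"]) (auto simp: divide_ennreal wmeas_nonneg)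
  from enn_rpow_mono[OF this, of "1 / p"] assms(2,5) show ?thesis
    by (simp add: morrey_norm_def wmeas_nonneg)
qed

lemma ratio_le_of_dual_bounds:
  fixes a b v K L1 L2 \<rho> \<delta> :: real
  assumes "0 \<le> a" "0 < b" "0 \<le> L1" "0 < L2"
    and upper: "a * v powr (\<rho> - 1) \<le> K * L1 powr \<delta> * L2 powr (\<rho> - \<delta>)"
    and lower: "(L2 / 2) powr \<rho> \<le> b * v powr (\<rho> - 1)"
  shows "a / b \<le> 2 powr \<rho> * K * (L1 / L2) powr \<delta>"
proof -
  have "a * (L2 / 2) powr \<rho> \<le> b * (a * v powr (\<rho> - 1))"
    using mult_left_mono[OF lower assms(1)] by (simp add: algebra_simps)
  also have "\<dots> \<le> b * (K * L1 powr \<delta> * L2 powr (\<rho> - \<delta>))"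
    using upper assms(2) by simp
  finally have "a / b \<le> K * L1 powr \<delta> * L2 powr (\<rho> - \<delta>) / (L2 / 2) powr \<rho>"
    using assms(2,4) by (simp add: field_simps)
  also have "\<dots> = 2 powr \<rho> * K * (L1 / L2) powr \<delta>"
    using assms(3,4) by (simp add: powr_divide powr_diff field_simps)
  finally show ?thesis .
qed

text \<open>The dimension is a parameter \<open>n\<close> so that the exponents defined in the locale do not
  depend on a hidden type variable.\<close>
locale A_morrey_weight =
  fixes w :: "'a::euclidean_space \<Rightarrow> real" and n p l1 l2 C :: real
  assumes dim: "n = real DIM('a)"
    and p_ge_1: "1 \<le> p" and l1_nonneg: "0 \<le> l1" and l2_nonneg: "0 \<le> l2"
    and l_sum_pos: "0 < l1 + l2" and l_sum_less: "l1 + l2 < n"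
    and weight: "is_weight w" and C_pos: "0 < C"
    and A_bound: "\<And>x r. 0 < r \<Longrightarrow> morrey_norm p (phi_w l1 l2 w) w (indicator (ball x r))
        * kothe_norm (morrey_norm p (phi_w l1 l2 w) w) (indicator (ball x r))
      \<le> ennreal C * emeasure lebesgue (ball x r)"
begin

lemma n_pos: "0 < n"
  by (simp add: dim)

definition \<rho> :: real where "\<rho> = (n * p + l1) / (n - l2)"
definition \<delta> :: real where "\<delta> = l1 / (n - l2)"

text \<open>\<open>w\<^bsup>-\<kappa>\<^esup> = w\<^bsup>1-\<rho>'\<^esup>\<close> is the dual weight of the \<open>A\<^sub>\<rho>\<close> condition.\<close>
definition \<kappa> :: real where "\<kappa> = 1 / (\<rho> - 1)"

lemma \<rho>_minus_1: "(\<rho> - 1) * (n - l2) = n * p + l1 + l2 - n"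
  using l1_nonneg l_sum_less by (simp add: \<rho>_def field_simps)

lemma \<rho>_gt_1: "1 < \<rho>"
proof -
  have "n \<le> n * p"
    using p_ge_1 n_pos by simp
  then have "0 < (\<rho> - 1) * (n - l2)"
    using l_sum_pos unfolding \<rho>_minus_1 by linarith
  then show ?thesis
    using l1_nonneg l_sum_less by (simp add: zero_less_mult_iff)
qed

lemma \<kappa>_pos: "0 < \<kappa>"
  using \<rho>_gt_1 by (simp add: \<kappa>_def)

lemma \<rho>_minus_\<delta>: "\<rho> - \<delta> = n * p / (n - l2)"
  by (simp add: \<rho>_def \<delta>_def diff_divide_distrib[symmetric])

lemma \<rho>_minus_\<delta>_pos: "0 < \<rho> - \<delta>"
  using p_ge_1 n_pos l1_nonneg l_sum_less by (simp add: \<rho>_minus_\<delta>)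

lemma dual_exponent: "1 - \<rho> / (\<rho> - 1) = - \<kappa>"
  using \<rho>_gt_1 by (simp add: \<kappa>_def field_simps)

lemma test_exponent:
  "1 - \<kappa> * p = l2 / n - \<kappa> * ((n - l1 - l2) / n)"
proof -
  have "\<kappa> * (n * p + l1 + l2 - n) = n - l2"
    using \<rho>_gt_1 l1_nonneg l_sum_less by (simp add: \<kappa>_def flip: \<rho>_minus_1)
  then show ?thesis
    using n_pos by (simp add: field_simps)
qed

text \<open>Taking logarithms, the conclusion is the hypothesis multiplied by \<open>\<rho> - \<delta> = np/(n - \<lambda>\<^sub>2)\<close>.\<close>
lemma dual_estimate_rescale:
  fixes a v \<omega> r1 L2 :: real
  assumes pos: "0 < a" "0 < v" "0 < \<omega>" "0 < r1" "0 < L2"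
    and le: "(a / (r1 powr l1 * a powr (l2 / n))) powr (1 / p)
      * ((\<omega> powr (l1 / n) * v powr ((n - l1 - l2) / n)) powr (- 1 / p) * v) \<le> C * L2"
  shows "a * v powr (\<rho> - 1) \<le> C powr (\<rho> - \<delta>) * (\<omega> * r1 powr n) powr \<delta> * L2 powr (\<rho> - \<delta>)"
proof -
  have n: "0 < n" "0 < n - l2" using l_sum_less l1_nonneg by (auto simp: dim)
  have p: "0 < p" using p_ge_1 by simp
  define X1 X2 X3 X4 where "X1 = (1 - l2 / n) / p" and "X2 = l1 / p" and "X3 = l1 / (n * p)"
    and "X4 = 1 - (n - l1 - l2) / (n * p)"
  have "ln ((a / (r1 powr l1 * a powr (l2 / n))) powr (1 / p)
      * ((\<omega> powr (l1 / n) * v powr ((n - l1 - l2) / n)) powr (- 1 / p) * v))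
    = X1 * ln a - X2 * ln r1 - X3 * ln \<omega> + X4 * ln v"
    using pos n p by (simp add: X1_def X2_def X3_def X4_def ln_mult ln_div field_simps)
  moreover have "ln ((a / (r1 powr l1 * a powr (l2 / n))) powr (1 / p)
      * ((\<omega> powr (l1 / n) * v powr ((n - l1 - l2) / n)) powr (- 1 / p) * v)) \<le> ln (C * L2)"
    using le pos C_pos by simp
  ultimately have "X1 * ln a - X2 * ln r1 - X3 * ln \<omega> + X4 * ln v \<le> ln C + ln L2"
    using pos C_pos by (simp add: ln_mult)
  then have scaled: "(\<rho> - \<delta>) * (X1 * ln a - X2 * ln r1 - X3 * ln \<omega> + X4 * ln v) \<le> (\<rho> - \<delta>) * (ln C + ln L2)"
    using \<rho>_minus_\<delta>_pos by (simp add: mult_left_mono)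
  have coeffs: "(\<rho> - \<delta>) * X1 = 1" "(\<rho> - \<delta>) * X2 = \<delta> * n" "(\<rho> - \<delta>) * X3 = \<delta>"
    "(\<rho> - \<delta>) * X4 = \<rho> - 1"
    unfolding \<rho>_minus_\<delta> using n p
    by (simp_all add: X1_def X2_def X3_def X4_def \<rho>_def \<delta>_def field_simps)
  have "(\<rho> - \<delta>) * (X1 * ln a - X2 * ln r1 - X3 * ln \<omega> + X4 * ln v)
      = ((\<rho> - \<delta>) * X1) * ln a - ((\<rho> - \<delta>) * X2) * ln r1 - ((\<rho> - \<delta>) * X3) * ln \<omega>
        + ((\<rho> - \<delta>) * X4) * ln v"
    by (simp only: algebra_simps)
  also have "\<dots> = ln a - \<delta> * (ln \<omega> + n * ln r1) + (\<rho> - 1) * ln v"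
    unfolding coeffs by (simp add: algebra_simps)
  finally have "ln a + (\<rho> - 1) * ln v \<le> (\<rho> - \<delta>) * ln C + \<delta> * (ln \<omega> + n * ln r1) + (\<rho> - \<delta>) * ln L2"
    using scaled by (simp add: algebra_simps)
  then show ?thesis
    using pos C_pos by (simp add: ln_mult flip: ln_le_cancel_iff)
qed

abbreviation morrey :: "('a \<Rightarrow> real) \<Rightarrow> ennreal" where
  "morrey \<equiv> morrey_norm p (phi_w l1 l2 w) w"

lemma w_nonneg: "0 \<le> w y"
  using weight by (simp add: is_weight_def)

lemma w_measurable [measurable]: "w \<in> borel_measurable lebesgue"
  using weight by (simp add: is_weight_def)

lemma phi_w_pos: "0 < r \<Longrightarrow> 0 < wmeas w (ball x r) \<Longrightarrow> 0 < phi_w l1 l2 w x r"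
  by (simp add: phi_w_eq)

lemma A_bound_real:
  assumes "0 < r" "0 \<le> a" "0 \<le> b"
    and "ennreal a \<le> morrey (indicator (ball x r))"
    and "ennreal b \<le> kothe_norm morrey (indicator (ball x r))"
  shows "a * b \<le> C * measure lebesgue (ball x r)"
proof -
  have "ennreal (a * b) \<le> morrey (indicator (ball x r)) * kothe_norm morrey (indicator (ball x r))"
    using assms(2-5) by (simp add: ennreal_mult mult_mono)
  also have "\<dots> \<le> ennreal (C * measure lebesgue (ball x r))"
    using A_bound[OF assms(1)] C_pos by (simp add: emeasure_lebesgue_ball ennreal_mult)
  finally show ?thesis
    using C_pos by simp
qed

text \<open>Otherwise every multiple of the indicator of the zero set has Morrey norm 0, so the
  Koethe norm of the indicator of the ball would be infinite.\<close>
lemma null_zero_set: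
  assumes r: "0 < r" and w_pos: "0 < wmeas w (ball x r)"
  shows "ball x r \<inter> {y. w y = 0} \<in> null_sets lebesgue"
proof (rule ccontr)
  define Z where "Z = ball x r \<inter> {y. w y = 0}"
  have Z_sets [measurable]: "Z \<in> sets lebesgue"
    unfolding Z_def by (intro sets.Int sets_lebesgue_Collect) measurable
  assume "Z \<notin> null_sets lebesgue"
  moreover have Z_finite: "emeasure lebesgue Z < top"
    using emeasure_mono[of Z "ball x r" lebesgue] emeasure_lborel_ball_finite[of x r]
    by (auto simp: Z_def)
  ultimately have m: "0 < measure lebesgue Z"
    by (simp add: emeasure_eq_ennreal_measure less_top zero_less_measure_iff null_sets_def)
  define X where "X = (wmeas w (ball x r) / phi_w l1 l2 w x r) powr (1 / p)"
  have X: "0 < X"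
    using phi_w_pos[OF r w_pos] w_pos by (simp add: X_def)
  have X_le: "ennreal X \<le> morrey (indicator (ball x r))"
    unfolding X_def using weight p_ge_1 r phi_w_pos[OF r w_pos]
    by (intro morrey_norm_indicator_ball_ge) auto
  have "X * (k * measure lebesgue Z) \<le> C * measure lebesgue (ball x r)" if k: "0 \<le> k" for k
  proof (rule A_bound_real[OF r _ _ X_le])
    have vanish: "\<bar>k * indicator Z y\<bar> powr p * w y = 0" for y
      by (simp add: Z_def indicator_def)
    have "morrey (\<lambda>y. k * indicator Z y) \<le> 1"
      using p_ge_1 by (intro morrey_norm_le_one) (simp, simp only: vanish, simp)
    then have "(\<integral>\<^sup>+ y. ennreal \<bar>k * indicator Z y * indicator (ball x r) y\<bar> \<partial>lebesgue)
        \<le> kothe_norm morrey (indicator (ball x r))"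
      by (intro kothe_norm_ge) auto
    moreover have "(\<integral>\<^sup>+ y. ennreal \<bar>k * indicator Z y * indicator (ball x r) y\<bar> \<partial>lebesgue)
        = (\<integral>\<^sup>+ y. ennreal k * indicator Z y \<partial>lebesgue)"
      using k by (intro nn_integral_cong) (auto simp: Z_def indicator_def)
    moreover have "\<dots> = ennreal (k * measure lebesgue Z)"
      using k Z_finite
      by (simp add: nn_integral_cmult_indicator emeasure_eq_ennreal_measure less_top ennreal_mult)
    ultimately show "ennreal (k * measure lebesgue Z) \<le> kothe_norm morrey (indicator (ball x r))"
      by simp
  qed (use X m k in auto)
  from this[of "(C * measure lebesgue (ball x r) + 1) / (X * measure lebesgue Z)"] X m C_pos
  show False
    by simp
qed

text \<open>The normalisation turns the Hoelder bound \<open>w(B)\<^bsup>\<lambda>\<^sub>2/n\<^esup> \<sigma>(E)\<^bsup>(n-\<lambda>\<^sub>1-\<lambda>\<^sub>2)/n\<^esup> |B|\<^bsup>\<lambda>\<^sub>1/n\<^esup>\<close> for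
  \<open>|f|\<^sup>p w\<close> into \<open>r\<^bsup>\<lambda>\<^sub>1\<^esup> w(B)\<^bsup>\<lambda>\<^sub>2/n\<^esup> \<le> \<phi>(B)\<close>, using \<open>|B| = \<omega>\<^sub>n r\<^sup>n\<close>.\<close>
definition test_const :: "real \<Rightarrow> real" where
  "test_const v = (unit_ball_vol n powr (l1 / n) * v powr ((n - l1 - l2) / n)) powr (- 1 / p)"

lemma test_const_pos: "0 < v \<Longrightarrow> 0 < test_const v"
  using unit_ball_vol_pos[OF less_imp_le[OF n_pos]] by (simp add: test_const_def)

lemma test_integrand_eq:
  assumes "0 < k" "0 < w y"
  shows "\<bar>k * w y powr - \<kappa>\<bar> powr p * w y
    = k powr p * (w y powr (l2 / n) * (w y powr - \<kappa>) powr ((n - l1 - l2) / n))"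
proof -
  have "\<bar>k * w y powr - \<kappa>\<bar> powr p * w y = k powr p * (w y powr (- \<kappa> * p) * w y powr 1)"
    using assms by (simp add: powr_mult powr_powr)
  also have "\<dots> = k powr p * w y powr (1 - \<kappa> * p)"
    by (subst powr_add[symmetric]) (simp add: algebra_simps)
  also have "\<dots> = k powr p * (w y powr (l2 / n) * w y powr (- \<kappa> * ((n - l1 - l2) / n)))"
    by (subst powr_add[symmetric]) (simp add: test_exponent)
  finally show ?thesis
    by (simp add: powr_powr)
qed

lemma nn_integral_test_holder:
  assumes E [measurable]: "E \<in> sets lebesgue" and w_pos: "\<And>y. y \<in> E \<Longrightarrow> 0 < w y"
    and v: "(\<integral>\<^sup>+ y\<in>E. ennreal (w y powr - \<kappa>) \<partial>lebesgue) = ennreal v" "0 < v"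
  shows "(\<integral>\<^sup>+ y\<in>ball x r \<inter> E. ennreal (w y powr (l2 / n) * (w y powr - \<kappa>) powr ((n - l1 - l2) / n)) \<partial>lebesgue)
    \<le> ennreal (wmeas w (ball x r) powr (l2 / n) * v powr ((n - l1 - l2) / n)
        * measure lebesgue (ball x r) powr (l1 / n))"
proof (rule nn_integral_powr_mult_le)
  show "(\<integral>\<^sup>+ y\<in>ball x r \<inter> E. ennreal (w y) \<partial>lebesgue) \<le> ennreal (wmeas w (ball x r))"
    unfolding is_weight_nn_integral_ball[OF weight, symmetric]
    by (intro nn_integral_mono) (auto simp: indicator_def)
  show "(\<integral>\<^sup>+ y\<in>ball x r \<inter> E. ennreal (w y powr - \<kappa>) \<partial>lebesgue) \<le> ennreal v"
    unfolding v(1)[symmetric] by (intro nn_integral_mono) (auto simp: indicator_def)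
  show "emeasure lebesgue (ball x r \<inter> E) \<le> ennreal (measure lebesgue (ball x r))"
    unfolding emeasure_lebesgue_ball[symmetric] by (intro emeasure_mono) auto
qed (use v(2) n_pos l1_nonneg l2_nonneg l_sum_less in \<open>auto simp: wmeas_nonneg field_simps dest: w_pos\<close>)

lemma morrey_dual_test_le_one:
  assumes E [measurable]: "E \<in> sets lebesgue" and w_pos: "\<And>y. y \<in> E \<Longrightarrow> 0 < w y"
    and v: "(\<integral>\<^sup>+ y\<in>E. ennreal (w y powr - \<kappa>) \<partial>lebesgue) = ennreal v" "0 < v"
  shows "morrey (\<lambda>y. test_const v * indicator E y * w y powr - \<kappa>) \<le> 1"
proof (rule morrey_norm_le_one)
  show "0 < p"
    using p_ge_1 by simp
  fix x :: 'a and r :: real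
  assume r: "0 < r"
  define k \<omega> where "k = test_const v" and "\<omega> = unit_ball_vol n"
  have k: "0 < k" and \<omega>: "0 < \<omega>"
    using test_const_pos[OF v(2)] by (simp_all add: k_def \<omega>_def dim)
  have "ennreal (\<bar>k * indicator E y * w y powr - \<kappa>\<bar> powr p * w y) * indicator (ball x r) y
      = ennreal (k powr p) * (ennreal (w y powr (l2 / n) * (w y powr - \<kappa>) powr ((n - l1 - l2) / n))
        * indicator (ball x r \<inter> E) y)" for y
    using k w_pos[of y] p_ge_1 test_integrand_eq[OF k, of y]
    by (cases "y \<in> E") (auto simp: indicator_def ennreal_mult)
  then have "(\<integral>\<^sup>+ y\<in>ball x r. ennreal (\<bar>k * indicator E y * w y powr - \<kappa>\<bar> powr p * w y) \<partial>lebesgue)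
      = ennreal (k powr p) * (\<integral>\<^sup>+ y\<in>ball x r \<inter> E.
          ennreal (w y powr (l2 / n) * (w y powr - \<kappa>) powr ((n - l1 - l2) / n)) \<partial>lebesgue)"
    by (simp add: nn_integral_cmult)
  also have "\<dots> \<le> ennreal (k powr p) * ennreal (wmeas w (ball x r) powr (l2 / n) * v powr ((n - l1 - l2) / n)
      * measure lebesgue (ball x r) powr (l1 / n))"
    using nn_integral_test_holder[OF E w_pos v] by (rule mult_left_mono) simp_all
  also have "\<dots> = ennreal (r powr l1 * wmeas w (ball x r) powr (l2 / n))"
  proof -
    have "measure lebesgue (ball x r) powr (l1 / n) = \<omega> powr (l1 / n) * r powr l1"
      using \<omega> n_pos unfolding measure_lebesgue_ball[OF r] by (simp add: \<omega>_def dim powr_mult powr_powr)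
    moreover have "k powr p = 1 / (\<omega> powr (l1 / n) * v powr ((n - l1 - l2) / n))"
      unfolding k_def test_const_def powr_powr using p_ge_1 \<omega> v(2) by (simp add: \<omega>_def powr_minus_divide)
    ultimately show ?thesis
      using k \<omega> v(2) by (simp add: ennreal_mult[symmetric] wmeas_nonneg field_simps)
  qed
  also have "\<dots> \<le> ennreal (phi_w l1 l2 w x r)"
    using phi_w_ge[of r l1 w x l2] by (simp add: dim ennreal_leI)
  finally show "(\<integral>\<^sup>+ y\<in>ball x r. ennreal (\<bar>test_const v * indicator E y * w y powr - \<kappa>\<bar> powr p * w y) \<partial>lebesgue)
      \<le> ennreal (phi_w l1 l2 w x r)"
    by (simp add: k_def)
qed

lemma kothe_indicator_ball_ge:
  assumes E [measurable]: "E \<in> sets lebesgue" and E_sub: "E \<subseteq> ball x r"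
    and w_pos: "\<And>y. y \<in> E \<Longrightarrow> 0 < w y"
    and v: "(\<integral>\<^sup>+ y\<in>E. ennreal (w y powr - \<kappa>) \<partial>lebesgue) = ennreal v" "0 < v"
  shows "ennreal (test_const v * v) \<le> kothe_norm morrey (indicator (ball x r))"
proof -
  have "(\<integral>\<^sup>+ y. ennreal \<bar>test_const v * indicator E y * w y powr - \<kappa> * indicator (ball x r) y\<bar> \<partial>lebesgue)
      = (\<integral>\<^sup>+ y. ennreal (test_const v) * (ennreal (w y powr - \<kappa>) * indicator E y) \<partial>lebesgue)"
    using E_sub test_const_pos[OF v(2)]
    by (intro nn_integral_cong) (auto simp: indicator_def ennreal_mult)
  also have "\<dots> = ennreal (test_const v * v)"
    using v test_const_pos[OF v(2)] by (simp add: nn_integral_cmult ennreal_mult)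
  moreover have "(\<integral>\<^sup>+ y. ennreal \<bar>test_const v * indicator E y * w y powr - \<kappa> * indicator (ball x r) y\<bar> \<partial>lebesgue)
      \<le> kothe_norm morrey (indicator (ball x r))"
    using morrey_dual_test_le_one[OF E w_pos v] by (intro kothe_norm_ge) measurable
  ultimately show ?thesis
    by simp
qed

lemma nn_integral_dual_weight_finite:
  assumes "E \<subseteq> ball x r" "E \<in> sets lebesgue" "0 < \<epsilon>" "\<And>y. y \<in> E \<Longrightarrow> \<epsilon> \<le> w y"
  shows "(\<integral>\<^sup>+ y\<in>E. ennreal (w y powr - \<kappa>) \<partial>lebesgue) < top"
proof -
  have "(\<integral>\<^sup>+ y\<in>E. ennreal (w y powr - \<kappa>) \<partial>lebesgue) \<le> (\<integral>\<^sup>+ y\<in>E. ennreal (\<epsilon> powr - \<kappa>) \<partial>lebesgue)"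
    using assms(3,4) \<kappa>_pos
    by (intro nn_integral_mono) (auto simp: indicator_def intro!: ennreal_leI powr_mono2')
  also have "\<dots> = ennreal (\<epsilon> powr - \<kappa>) * emeasure lebesgue E"
    using assms(2) by (simp add: nn_integral_cmult_indicator)
  also have "\<dots> < top"
    using emeasure_mono[OF assms(1), of lebesgue] emeasure_lborel_ball_finite[of x r]
    by (auto simp: ennreal_mult_less_top intro: order.strict_trans1)
  finally show ?thesis .
qed

lemma weight_dual_estimate:
  assumes r1: "0 < r1" and sub: "ball x1 r1 \<subseteq> ball x2 r2"
    and E [measurable]: "E \<in> sets lebesgue" and E_sub: "E \<subseteq> ball x2 r2"
    and \<epsilon>: "0 < \<epsilon>" "\<And>y. y \<in> E \<Longrightarrow> \<epsilon> \<le> w y"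
  shows "wmeas w (ball x1 r1) * enn2real (\<integral>\<^sup>+ y\<in>E. ennreal (w y powr - \<kappa>) \<partial>lebesgue) powr (\<rho> - 1)
    \<le> C powr (\<rho> - \<delta>) * measure lebesgue (ball x1 r1) powr \<delta> * measure lebesgue (ball x2 r2) powr (\<rho> - \<delta>)"
proof -
  have "x1 \<in> ball x2 r2"
    using sub r1 centre_in_ball by blast
  then have r2: "0 < r2"
    by (auto intro: le_less_trans[OF zero_le_dist])
  define a v where "a = wmeas w (ball x1 r1)" and "v = enn2real (\<integral>\<^sup>+ y\<in>E. ennreal (w y powr - \<kappa>) \<partial>lebesgue)"
  have v_eq: "(\<integral>\<^sup>+ y\<in>E. ennreal (w y powr - \<kappa>) \<partial>lebesgue) = ennreal v"
    using nn_integral_dual_weight_finite[OF E_sub E \<epsilon>] by (simp add: v_def less_top)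
  show ?thesis
  proof (cases "a = 0 \<or> v = 0")
    case True
    then show ?thesis
      using C_pos by (auto simp: a_def v_def)
  next
    case False
    then have a: "0 < a" and v: "0 < v"
      using wmeas_nonneg[of w] enn2real_nonneg by (auto simp: a_def v_def order_le_less)
    have w_pos: "0 < w y" if "y \<in> E" for y
      using \<epsilon> that by (meson less_le_trans)
    have "ennreal ((a / phi_w l1 l2 w x1 r1) powr (1 / p)) \<le> morrey (indicator (ball x2 r2))"
      unfolding a_def using weight p_ge_1 r1 sub phi_w_pos[OF r1 a[unfolded a_def]]
      by (intro morrey_norm_indicator_ball_ge) auto
    with kothe_indicator_ball_ge[OF E E_sub w_pos v_eq v]
    have "(a / phi_w l1 l2 w x1 r1) powr (1 / p) * (test_const v * v) \<le> C * measure lebesgue (ball x2 r2)"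
      using a v test_const_pos[OF v] by (intro A_bound_real[OF r2]) auto
    moreover have "phi_w l1 l2 w x1 r1 = r1 powr l1 * a powr (l2 / n)"
      using phi_w_eq[OF a[unfolded a_def]] by (simp add: a_def dim)
    ultimately have "(a / (r1 powr l1 * a powr (l2 / n))) powr (1 / p)
        * ((unit_ball_vol n powr (l1 / n) * v powr ((n - l1 - l2) / n)) powr (- 1 / p) * v)
      \<le> C * (unit_ball_vol n * r2 powr n)"
      unfolding measure_lebesgue_ball[OF r2] test_const_def dim[symmetric] by (simp add: mult.assoc)
    then have "a * v powr (\<rho> - 1) \<le> C powr (\<rho> - \<delta>) * (unit_ball_vol n * r1 powr n) powr \<delta>
        * (unit_ball_vol n * r2 powr n) powr (\<rho> - \<delta>)"
      using a v r1 r2 n_pos by (intro dual_estimate_rescale) auto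
    then show ?thesis
      unfolding measure_lebesgue_ball[OF r1] measure_lebesgue_ball[OF r2] dim[symmetric] by (simp add: a_def v_def)
  qed
qed

definition ball_level :: "'a \<Rightarrow> real \<Rightarrow> nat \<Rightarrow> 'a set" where
  "ball_level x r m = ball x r \<inter> {y. 1 / Suc m \<le> w y}"

lemma ball_level_sets [measurable]: "ball_level x r m \<in> sets lebesgue"
  unfolding ball_level_def by (intro sets.Int sets_lebesgue_Collect) measurable

lemma ball_level_subset: "ball_level x r m \<subseteq> ball x r"
  by (auto simp: ball_level_def)

lemma ball_level_lower: "y \<in> ball_level x r m \<Longrightarrow> 1 / Suc m \<le> w y"
  by (simp add: ball_level_def)

lemma incseq_ball_level: "incseq (ball_level x r)"
proof (rule incseq_SucI)
  fix m
  have "1 / real (Suc (Suc m)) \<le> 1 / real (Suc m)"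
    by (simp add: frac_le)
  then show "ball_level x r m \<subseteq> ball_level x r (Suc m)"
    by (auto simp: ball_level_def)
qed

lemma UN_ball_level: "(\<Union>m. ball_level x r m) = ball x r \<inter> {y. 0 < w y}"
proof (intro equalityI subsetI)
  fix y assume "y \<in> ball x r \<inter> {y. 0 < w y}"
  moreover obtain m where "inverse (real (Suc m)) < w y"
    using calculation reals_Archimedean by auto
  ultimately show "y \<in> (\<Union>m. ball_level x r m)"
    by (auto simp: ball_level_def inverse_eq_divide intro!: exI[of _ m])
qed (auto simp: ball_level_def intro: less_le_trans[rotated])

lemma SUP_nn_integral_ball_level:
  assumes [measurable]: "g \<in> borel_measurable lebesgue"
  shows "(SUP m. \<integral>\<^sup>+ y\<in>ball_level x r m. g y \<partial>lebesgue) = (\<integral>\<^sup>+ y\<in>ball x r \<inter> {y. 0 < w y}. g y \<partial>lebesgue)"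
proof -
  have "(SUP m. emeasure (density lebesgue g) (ball_level x r m)) = emeasure (density lebesgue g) (\<Union>m. ball_level x r m)"
    using incseq_ball_level by (intro SUP_emeasure_incseq) auto
  moreover have "ball x r \<inter> {y. 0 < w y} \<in> sets lebesgue"
    by (intro sets.Int sets_lebesgue_Collect) measurable
  ultimately show ?thesis
    by (simp add: emeasure_density UN_ball_level)
qed

lemma emeasure_positive_part_ball:
  assumes "0 < r" "0 < wmeas w (ball x r)"
  shows "emeasure lebesgue (ball x r \<inter> {y. 0 < w y}) = emeasure lebesgue (ball x r)"
proof -
  have "ball x r = (ball x r \<inter> {y. 0 < w y}) \<union> (ball x r \<inter> {y. w y = 0})"
    using w_nonneg by (auto simp: order_le_less)
  moreover have "ball x r \<inter> {y. 0 < w y} \<in> sets lebesgue"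
    by (intro sets.Int sets_lebesgue_Collect) measurable
  ultimately show ?thesis
    using emeasure_Un_null_set[OF _ null_zero_set[OF assms]] by metis
qed

lemma measure_ball_level_gt_half:
  assumes "0 < r" "0 < wmeas w (ball x r)"
  shows "\<exists>m. measure lebesgue (ball x r) / 2 < measure lebesgue (ball_level x r m)"
proof -
  have "(SUP m. emeasure lebesgue (ball_level x r m)) = ennreal (measure lebesgue (ball x r))"
    using SUP_nn_integral_ball_level[of "\<lambda>_. 1" x r] emeasure_positive_part_ball[OF assms]
    by (simp add: emeasure_lebesgue_ball)
  moreover have "ennreal (measure lebesgue (ball x r) / 2) < ennreal (measure lebesgue (ball x r))"
    using measure_lebesgue_ball_pos[OF assms(1)] by (simp add: ennreal_less_iff)
  ultimately obtain m where "ennreal (measure lebesgue (ball x r) / 2) < emeasure lebesgue (ball_level x r m)"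
    by (metis less_SUP_iff)
  moreover have "emeasure lebesgue (ball_level x r m) = ennreal (measure lebesgue (ball_level x r m))"
    using emeasure_mono[OF ball_level_subset[of x r m], of lebesgue] emeasure_lborel_ball_finite[of x r]
    by (intro emeasure_eq_ennreal_measure) (auto simp: top_unique)
  ultimately show ?thesis
    by (auto simp: ennreal_less_iff)
qed

lemma measure_powr_le_weight_dual:
  assumes r: "0 < r" and E [measurable]: "E \<in> sets lebesgue" and E_sub: "E \<subseteq> ball x r"
    and \<epsilon>: "0 < \<epsilon>" "\<And>y. y \<in> E \<Longrightarrow> \<epsilon> \<le> w y"
  shows "measure lebesgue E powr \<rho>
    \<le> wmeas w (ball x r) * enn2real (\<integral>\<^sup>+ y\<in>E. ennreal (w y powr - \<kappa>) \<partial>lebesgue) powr (\<rho> - 1)"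
proof -
  define v where "v = enn2real (\<integral>\<^sup>+ y\<in>E. ennreal (w y powr - \<kappa>) \<partial>lebesgue)"
  have v_eq: "(\<integral>\<^sup>+ y\<in>E. ennreal (w y powr - \<kappa>) \<partial>lebesgue) = ennreal v"
    using nn_integral_dual_weight_finite[OF E_sub E \<epsilon>] by (simp add: v_def less_top)
  have w_pos: "0 < w y" if "y \<in> E" for y
    using \<epsilon> that by (meson less_le_trans)
  have "w y powr (1 / \<rho>) * (w y powr - \<kappa>) powr (1 - 1 / \<rho>) = 1" if "y \<in> E" for y
    using w_pos[OF that] \<rho>_gt_1 by (simp add: powr_powr \<kappa>_def field_simps flip: powr_add)
  then have "(\<integral>\<^sup>+ y\<in>E. ennreal (w y powr (1 / \<rho>) * (w y powr - \<kappa>) powr (1 - 1 / \<rho>)) \<partial>lebesgue)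
      = (\<integral>\<^sup>+ y. indicator E y \<partial>lebesgue)"
    by (intro nn_integral_cong) (simp add: indicator_def)
  then have "emeasure lebesgue E
      = (\<integral>\<^sup>+ y\<in>E. ennreal (w y powr (1 / \<rho>) * (w y powr - \<kappa>) powr (1 - 1 / \<rho>)) \<partial>lebesgue)"
    by simp
  also have "\<dots> \<le> ennreal (wmeas w (ball x r) powr (1 / \<rho>) * v powr (1 - 1 / \<rho>)
      * measure lebesgue (ball x r) powr 0)"
  proof (rule nn_integral_powr_mult_le)
    show "(\<integral>\<^sup>+ y\<in>E. ennreal (w y) \<partial>lebesgue) \<le> ennreal (wmeas w (ball x r))"
      unfolding is_weight_nn_integral_ball[OF weight, symmetric]
      using E_sub by (intro nn_integral_mono) (auto simp: indicator_def)
    show "emeasure lebesgue E \<le> ennreal (measure lebesgue (ball x r))"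
      unfolding emeasure_lebesgue_ball[symmetric] using E_sub by (intro emeasure_mono) auto
  qed (use \<rho>_gt_1 v_eq in \<open>auto simp: wmeas_nonneg v_def dest: w_pos\<close>)
  also have "\<dots> = ennreal (wmeas w (ball x r) powr (1 / \<rho>) * v powr (1 - 1 / \<rho>))"
    using measure_lebesgue_ball_pos[OF r] by simp
  finally have "measure lebesgue E \<le> wmeas w (ball x r) powr (1 / \<rho>) * v powr (1 - 1 / \<rho>)"
    unfolding measure_def by (rule enn2real_leI[rotated]) simp
  then have "measure lebesgue E powr \<rho> \<le> (wmeas w (ball x r) powr (1 / \<rho>) * v powr (1 - 1 / \<rho>)) powr \<rho>"
    using \<rho>_gt_1 by (intro powr_mono2) auto
  also have "\<dots> = wmeas w (ball x r) * v powr (\<rho> - 1)"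
  proof -
    have "(1 - 1 / \<rho>) * \<rho> = \<rho> - 1"
      using \<rho>_gt_1 by (simp add: field_simps)
    then show ?thesis
      using \<rho>_gt_1 wmeas_nonneg[of w] by (simp add: powr_mult powr_powr v_def)
  qed
  finally show ?thesis
    by (simp add: v_def)
qed

lemma reverse_doubling:
  assumes r1: "0 < r1" and r2: "0 < r2" and sub: "ball x1 r1 \<subseteq> ball x2 r2"
  shows "wmeas w (ball x1 r1) / wmeas w (ball x2 r2)
    \<le> 2 powr \<rho> * C powr (\<rho> - \<delta>) * (measure lebesgue (ball x1 r1) / measure lebesgue (ball x2 r2)) powr \<delta>"
proof (cases "wmeas w (ball x2 r2) = 0")
  case True
  then show ?thesis by simp
next
  case False
  then have w2: "0 < wmeas w (ball x2 r2)"
    using wmeas_nonneg[of w "ball x2 r2"] by linarith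
  obtain m where m: "measure lebesgue (ball x2 r2) / 2 < measure lebesgue (ball_level x2 r2 m)"
    using measure_ball_level_gt_half[OF r2 w2] by blast
  define E v where "E = ball_level x2 r2 m"
    and "v = enn2real (\<integral>\<^sup>+ y\<in>E. ennreal (w y powr - \<kappa>) \<partial>lebesgue)"
  have E: "E \<in> sets lebesgue" "E \<subseteq> ball x2 r2" "\<And>y. y \<in> E \<Longrightarrow> 1 / Suc m \<le> w y"
    unfolding E_def by (simp, rule ball_level_subset, rule ball_level_lower)
  have "(measure lebesgue (ball x2 r2) / 2) powr \<rho> \<le> measure lebesgue E powr \<rho>"
    using m \<rho>_gt_1 by (intro powr_mono2) (auto simp: E_def)
  also have "\<dots> \<le> wmeas w (ball x2 r2) * v powr (\<rho> - 1)"
    unfolding v_def by (rule measure_powr_le_weight_dual[OF r2 E(1,2) _ E(3)]) simp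
  finally have lower: "(measure lebesgue (ball x2 r2) / 2) powr \<rho> \<le> wmeas w (ball x2 r2) * v powr (\<rho> - 1)" .
  have upper: "wmeas w (ball x1 r1) * v powr (\<rho> - 1)
      \<le> C powr (\<rho> - \<delta>) * measure lebesgue (ball x1 r1) powr \<delta> * measure lebesgue (ball x2 r2) powr (\<rho> - \<delta>)"
    unfolding v_def by (rule weight_dual_estimate[OF r1 sub E(1,2) _ E(3)]) simp
  show ?thesis
    using ratio_le_of_dual_bounds[OF wmeas_nonneg w2 measure_nonneg measure_lebesgue_ball_pos[OF r2] upper lower] .
qed

lemma nn_integral_dual_ball_eq_SUP:
  assumes s: "0 < s" and w_pos: "0 < wmeas w (ball x s)"
  shows "(\<integral>\<^sup>+ y\<in>ball x s. (if w y = 0 then top else ennreal (w y powr (1 - \<rho> / (\<rho> - 1)))) \<partial>lebesgue)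
    = (SUP m. \<integral>\<^sup>+ y\<in>ball_level x s m. ennreal (w y powr - \<kappa>) \<partial>lebesgue)"
proof -
  have "(\<integral>\<^sup>+ y\<in>ball x s. (if w y = 0 then top else ennreal (w y powr (1 - \<rho> / (\<rho> - 1)))) \<partial>lebesgue)
      = (\<integral>\<^sup>+ y\<in>ball x s \<inter> {y. 0 < w y}. ennreal (w y powr - \<kappa>) \<partial>lebesgue)"
    using AE_not_in[OF null_zero_set[OF s w_pos]]
    by (intro nn_integral_cong_AE, eventually_elim)
      (auto simp: indicator_def dual_exponent less_le w_nonneg)
  also have "\<dots> = (SUP m. \<integral>\<^sup>+ y\<in>ball_level x s m. ennreal (w y powr - \<kappa>) \<partial>lebesgue)"
    by (rule SUP_nn_integral_ball_level[symmetric]) measurable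
  finally show ?thesis .
qed

lemma nn_integral_dual_ball_level_le:
  assumes s: "0 < s" and w_pos: "0 < wmeas w (ball x s)"
  shows "(\<integral>\<^sup>+ y\<in>ball_level x s m. ennreal (w y powr - \<kappa>) \<partial>lebesgue)
    \<le> ennreal ((C powr (\<rho> - \<delta>) * measure lebesgue (ball x s) powr \<rho> / wmeas w (ball x s)) powr \<kappa>)"
proof -
  define v where "v = enn2real (\<integral>\<^sup>+ y\<in>ball_level x s m. ennreal (w y powr - \<kappa>) \<partial>lebesgue)"
  have v_eq: "(\<integral>\<^sup>+ y\<in>ball_level x s m. ennreal (w y powr - \<kappa>) \<partial>lebesgue) = ennreal v"
    using nn_integral_dual_weight_finite[OF ball_level_subset ball_level_sets _ ball_level_lower]
    by (simp add: v_def less_top)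
  have "wmeas w (ball x s) * v powr (\<rho> - 1)
      \<le> C powr (\<rho> - \<delta>) * measure lebesgue (ball x s) powr \<delta> * measure lebesgue (ball x s) powr (\<rho> - \<delta>)"
    unfolding v_def
    by (rule weight_dual_estimate[OF s order_refl ball_level_sets ball_level_subset _ ball_level_lower]) simp
  also have "\<dots> = C powr (\<rho> - \<delta>) * measure lebesgue (ball x s) powr \<rho>"
    by (simp add: mult.assoc flip: powr_add)
  finally have "v powr (\<rho> - 1) \<le> C powr (\<rho> - \<delta>) * measure lebesgue (ball x s) powr \<rho> / wmeas w (ball x s)"
    using w_pos by (simp add: field_simps)
  then have "(v powr (\<rho> - 1)) powr \<kappa>
      \<le> (C powr (\<rho> - \<delta>) * measure lebesgue (ball x s) powr \<rho> / wmeas w (ball x s)) powr \<kappa>"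
    using \<kappa>_pos by (intro powr_mono2) auto
  moreover have "(v powr (\<rho> - 1)) powr \<kappa> = v"
    using \<rho>_gt_1 by (simp add: v_def powr_powr \<kappa>_def)
  ultimately show ?thesis
    by (simp add: v_eq ennreal_leI)
qed

lemma muckenhoupt_ball:
  assumes s: "0 < s"
  shows "(\<integral>\<^sup>+ y\<in>ball x s. ennreal (w y) \<partial>lebesgue) / emeasure lebesgue (ball x s)
      * enn_rpow ((\<integral>\<^sup>+ y\<in>ball x s. (if w y = 0 then top else ennreal (w y powr (1 - \<rho> / (\<rho> - 1)))) \<partial>lebesgue)
          / emeasure lebesgue (ball x s)) (\<rho> - 1)
    \<le> ennreal (C powr (\<rho> - \<delta>))"
proof (cases "wmeas w (ball x s) = 0")
  case True
  then show ?thesis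
    by (simp add: is_weight_nn_integral_ball[OF weight])
next
  case False
  define a L where "a = wmeas w (ball x s)" and "L = measure lebesgue (ball x s)"
  have a: "0 < a"
    using False wmeas_nonneg[of w "ball x s"] by (simp add: a_def)
  have L: "0 < L"
    using s by (simp add: L_def measure_lebesgue_ball_pos)
  define T where "T = (C powr (\<rho> - \<delta>) * L powr \<rho> / a) powr \<kappa>"
  have dual_le: "(\<integral>\<^sup>+ y\<in>ball x s. (if w y = 0 then top else ennreal (w y powr (1 - \<rho> / (\<rho> - 1)))) \<partial>lebesgue)
      \<le> ennreal T"
    unfolding nn_integral_dual_ball_eq_SUP[OF s a[unfolded a_def]] T_def a_def L_def
    by (rule SUP_least) (rule nn_integral_dual_ball_level_le[OF s a[unfolded a_def]])
  have "(\<integral>\<^sup>+ y\<in>ball x s. ennreal (w y) \<partial>lebesgue) / emeasure lebesgue (ball x s)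
      * enn_rpow ((\<integral>\<^sup>+ y\<in>ball x s. (if w y = 0 then top else ennreal (w y powr (1 - \<rho> / (\<rho> - 1)))) \<partial>lebesgue)
          / emeasure lebesgue (ball x s)) (\<rho> - 1)
    = ennreal a / ennreal L
      * enn_rpow ((\<integral>\<^sup>+ y\<in>ball x s. (if w y = 0 then top else ennreal (w y powr (1 - \<rho> / (\<rho> - 1)))) \<partial>lebesgue)
          / ennreal L) (\<rho> - 1)"
    by (simp only: a_def L_def is_weight_nn_integral_ball[OF weight] emeasure_lebesgue_ball)
  also have "\<dots> \<le> ennreal a / ennreal L * enn_rpow (ennreal T / ennreal L) (\<rho> - 1)"
    using \<rho>_gt_1 by (intro mult_left_mono enn_rpow_mono divide_right_mono_ennreal dual_le) auto
  also have "\<dots> = ennreal (a / L * (T / L) powr (\<rho> - 1))"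
    using a L by (simp add: T_def divide_ennreal ennreal_mult[symmetric])
  also have "\<dots> = ennreal (C powr (\<rho> - \<delta>))"
  proof -
    have "(T / L) powr (\<rho> - 1) = T powr (\<rho> - 1) / L powr (\<rho> - 1)"
      by (rule powr_divide)
    also have "T powr (\<rho> - 1) = C powr (\<rho> - \<delta>) * L powr \<rho> / a"
      unfolding T_def powr_powr using \<rho>_gt_1 a L by (simp add: \<kappa>_def)
    also have "L powr \<rho> = L * L powr (\<rho> - 1)"
      using L by (simp add: powr_diff)
    finally show ?thesis
      using a L by (simp add: field_simps)
  qed
  finally show ?thesis .
qed

end

theorem proposition8p2:
  fixes w :: "'a::euclidean_space \<Rightarrow> real" and p l1 l2 :: real
  assumes "1 \<le> p"
    and "0 \<le> l1" and "l1 < real DIM('a)"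
    and "0 \<le> l2" and "l2 < real DIM('a)"
    and "0 < l1 + l2" and "l1 + l2 < real DIM('a)"
    and "is_weight w"
    and "A_morrey p (phi_w l1 l2 w) w"
  shows "RD (l1 / (real DIM('a) - l2)) w \<and>
         muckenhoupt ((real DIM('a) * p + l1) / (real DIM('a) - l2)) w"
proof -
  obtain C where C: "\<And>x r. 0 < r \<Longrightarrow> morrey_norm p (phi_w l1 l2 w) w (indicator (ball x r))
      * kothe_norm (morrey_norm p (phi_w l1 l2 w) w) (indicator (ball x r))
    \<le> ennreal C * emeasure lebesgue (ball x r)"
    using assms(9) by (auto simp: A_morrey_def)
  interpret A_morrey_weight w "real DIM('a)" p l1 l2 "max C 1"
  proof
    show "morrey_norm p (phi_w l1 l2 w) w (indicator (ball x r))
        * kothe_norm (morrey_norm p (phi_w l1 l2 w) w) (indicator (ball x r))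
      \<le> ennreal (max C 1) * emeasure lebesgue (ball x r)" if "0 < r" for x r
      using C[OF that] by (rule order.trans) (intro mult_right_mono ennreal_leI; simp)
  qed (use assms in auto)
  have "RD \<delta> w"
    unfolding RD_def using reverse_doubling by blast
  moreover have "muckenhoupt \<rho> w"
    unfolding muckenhoupt_def using muckenhoupt_ball by blast
  ultimately show ?thesis
    by (simp add: \<rho>_def \<delta>_def)
qed

end
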